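(* Let $d\ge 3$. For every $1\le i<d$, the element $a_1a_2\cdots a_i$ has infinite order in $G_d$.
   Context: Let $d\ge 3$, $X=\{1,\dots,d\}$, $T$ the $d$-regular rooted tree with vertex set $X^*$. $\mathrm{Aut}(T)$ is the group of root-preserving automorphisms with product left-to-right: $(gh)(u)=h(g(u))$. Sections $g|_u$ are defined by $g(uv)=g(u)\,g|_u(v)$; we write $g=(g|_1,\dots,g|_d)\lambda_g$ with $\lambda_g\in S_d$ the action on the first level; $e$ is the identity; $\overline{j}\in\{1,\dots,d\}$ denotes $j$ mod $d$. $G_d=\langle a_1,\dots,a_d\rangle\le\mathrm{Aut}(T)$ where $a_i$ acts on the first level as $(i\ \overline{i+1})$, with $a_i|_i=a_i$, $a_i|_{\overline{i+1}}=a_{\overline{i+1}}$, and $a_i|_x=e$ otherwise. *)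

theory Defs
  imports Main
begin

text \<open>Vertices of the d-regular rooted tree: finite words over {1..d}.
  An automorphism is represented by its action on words (nat list => nat list).\<close>

definition tree_vertices :: "nat \<Rightarrow> nat list set" where
  "tree_vertices d = {w. set w \<subseteq> {1..d}}"

definition cyc_succ :: "nat \<Rightarrow> nat \<Rightarrow> nat" where
  "cyc_succ d j = (j mod d) + 1"

text \<open>Action of the generator a_i: first level acts as the transposition
  (i, overline(i+1)); section at i is a_i, section at overline(i+1) is
  a_(overline(i+1)), all other sections trivial.\<close>
fun gen_act :: "nat \<Rightarrow> nat \<Rightarrow> nat list \<Rightarrow> nat list" where
  "gen_act d i [] = []"
| "gen_act d i (x # w) =
     (if x = i then cyc_succ d i # gen_act d i w
      else if x = cyc_succ d i then i # gen_act d (cyc_succ d i) w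
      else x # w)"

text \<open>Product is left-to-right: (g h)(u) = h (g u). The element
  a_{j1} a_{j2} ... a_{jk} therefore acts as first a_{j1}, then a_{j2}, etc.\<close>
definition word_act :: "nat \<Rightarrow> nat list \<Rightarrow> nat list \<Rightarrow> nat list" where
  "word_act d js = foldl (\<lambda>f j. gen_act d j \<circ> f) id js"

definition infinite_order_aut :: "nat \<Rightarrow> (nat list \<Rightarrow> nat list) \<Rightarrow> bool" where
  "infinite_order_aut d g \<longleftrightarrow>
     (\<forall>n::nat. n \<ge> 1 \<longrightarrow> (\<exists>u \<in> tree_vertices d. (g ^^ n) u \<noteq> u))"

end

theory Submission
  imports Defs
begin

text \<open>
  A power g^k (k \<ge> 1) that fixes a letter x with section h, where h has infinite order,
  forces g to have infinite order. For g = a_1 \<cdots> a_i, which permutes 1, \<dots>, i+1 cyclically,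
  g^(i+1) fixes 1 with section the zigzag a_1 \<cdots> a_(i+1) a_i \<cdots> a_2. The cube of a zigzag
  a_1 \<cdots> a_j a_(j-1) \<cdots> a_2 fixes 2 with section the shifted zigzag a_2 a_1 \<cdots> a_(j+1) a_j \<cdots> a_3,
  and the cube of that fixes 1 with the zigzag of length j+2 as section. At j = d the sections
  are c = a_1 \<cdots> a_d and b = a_2 a_1 a_d \<cdots> a_3, and c^(d-1) fixes 2 with section b while
  b^(d-1) fixes 1 with section c, all lower positive powers moving these letters. So a trivial
  power c^n or b^n forces n = (d-1) q with q < n and b^q resp. c^q trivial: infinite descent.
\<close>

section \<open>Action of products of generators on the first letter\<close>

lemma word_act_Nil [simp]: "word_act d [] = id"
  by (simp add: word_act_def)

lemma foldl_compose_shift: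
  "foldl (\<lambda>f j. gen_act d j \<circ> f) (f0 :: nat list \<Rightarrow> nat list) js = foldl (\<lambda>f j. gen_act d j \<circ> f) id js \<circ> f0"
proof (induction js arbitrary: f0)
  case (Cons j js)
  show ?case
    by (simp only: foldl_Cons Cons.IH[of "gen_act d j \<circ> f0"] Cons.IH[of "gen_act d j"] comp_assoc comp_id)
qed simp

lemma word_act_Cons: "word_act d (j # js) = word_act d js \<circ> gen_act d j"
  by (simp only: word_act_def foldl_Cons foldl_compose_shift[of d "gen_act d j"] comp_id)

lemma word_act_append: "word_act d (xs @ ys) w = word_act d ys (word_act d xs w)"
  by (induction xs arbitrary: w) (simp_all add: word_act_Cons)

lemma word_act_single: "word_act d [j] = gen_act d j"
  by (simp add: word_act_Cons)

lemma cyc_succ_less: "j < d \<Longrightarrow> cyc_succ d j = Suc j"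
  by (simp add: cyc_succ_def)

lemma cyc_succ_self: "0 < d \<Longrightarrow> cyc_succ d d = 1"
  by (simp add: cyc_succ_def)

lemma gen_act_Cons_self: "j < d \<Longrightarrow> gen_act d j (j # w) = Suc j # gen_act d j w"
  by (simp add: cyc_succ_less)

lemma gen_act_Cons_Suc: "j < d \<Longrightarrow> gen_act d j (Suc j # w) = j # gen_act d (Suc j) w"
  by (simp add: cyc_succ_less)

lemma gen_act_Cons_other: "j < d \<Longrightarrow> x \<noteq> j \<Longrightarrow> x \<noteq> Suc j \<Longrightarrow> gen_act d j (x # w) = x # w"
  by (simp add: cyc_succ_less)

lemma gen_act_last_Cons_self: "1 < d \<Longrightarrow> gen_act d d (d # w) = 1 # gen_act d d w"
  by (simp add: cyc_succ_self)

lemma gen_act_last_Cons_one: "1 < d \<Longrightarrow> gen_act d d (1 # w) = d # gen_act d 1 w"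
  by (simp add: cyc_succ_self)

lemma gen_act_last_Cons_other: "x \<noteq> d \<Longrightarrow> x \<noteq> 1 \<Longrightarrow> gen_act d d (x # w) = x # w"
  by (cases "d = 0") (simp_all add: cyc_succ_def)

declare gen_act.simps(2) [simp del]

lemma word_act_upt_Cons_outside:
  "e \<le> d \<Longrightarrow> x < a \<or> e < x \<Longrightarrow> word_act d [a..<e] (x # w) = x # w"
proof (induction e)
  case (Suc e)
  then show ?case
    by (cases "a \<le> e") (auto simp: word_act_append word_act_single gen_act_Cons_other)
qed simp

lemma word_act_upt_Cons_first:
  "e \<le> d \<Longrightarrow> a < e \<Longrightarrow> word_act d [a..<e] (a # w) = e # word_act d [a..<e] w"
proof (induction e)
  case (Suc e)
  then show ?case
    by (cases "a = e") (auto simp: word_act_append word_act_single gen_act_Cons_self)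
qed simp

lemma word_act_upt_Cons_inside:
  "e \<le> d \<Longrightarrow> a < x \<Longrightarrow> x \<le> e \<Longrightarrow> word_act d [a..<e] (x # w) = (x - 1) # gen_act d x w"
proof (induction e)
  case (Suc e)
  show ?case
  proof (cases "x = Suc e")
    case True
    with Suc.prems show ?thesis
      by (simp add: word_act_append word_act_single word_act_upt_Cons_outside gen_act_Cons_Suc)
  next
    case False
    with Suc show ?thesis
      by (auto simp: word_act_append word_act_single gen_act_Cons_other)
  qed
qed simp

lemma word_act_rev_upt_Cons_outside:
  "e \<le> d \<Longrightarrow> x < a \<or> e < x \<Longrightarrow> word_act d (rev [a..<e]) (x # w) = x # w"
proof (induction e)
  case (Suc e)
  then show ?case
    by (cases "a \<le> e") (auto simp: word_act_Cons gen_act_Cons_other)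
qed simp

lemma word_act_rev_upt_Cons_inside:
  "e \<le> d \<Longrightarrow> a \<le> x \<Longrightarrow> x < e \<Longrightarrow> word_act d (rev [a..<e]) (x # w) = Suc x # gen_act d x w"
proof (induction e)
  case (Suc e)
  show ?case
  proof (cases "x = e")
    case True
    with Suc.prems show ?thesis
      by (simp add: word_act_Cons word_act_rev_upt_Cons_outside gen_act_Cons_self)
  next
    case False
    with Suc show ?thesis
      by (auto simp: word_act_Cons gen_act_Cons_other)
  qed
qed simp

lemma word_act_rev_upt_Cons_last:
  "e \<le> d \<Longrightarrow> a \<le> e \<Longrightarrow>
   word_act d (rev [a..<e]) (e # w) = a # word_act d (rev [Suc a..<Suc e]) w"
proof (induction e arbitrary: w)
  case (Suc e)
  show ?case
  proof (cases "a = Suc e")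
    case False
    with Suc have "a \<le> e" "e < d" by auto
    with Suc.IH show ?thesis
      by (simp add: word_act_Cons gen_act_Cons_Suc)
  qed simp
qed simp

section \<open>Sections and infinite order\<close>

definition fixes_with_section :: "(nat list \<Rightarrow> nat list) \<Rightarrow> nat \<Rightarrow> (nat list \<Rightarrow> nat list) \<Rightarrow> bool" where
  "fixes_with_section g x h \<longleftrightarrow> (\<forall>w. g (x # w) = x # h w)"

definition moves_vertex :: "nat \<Rightarrow> (nat list \<Rightarrow> nat list) \<Rightarrow> bool" where
  "moves_vertex d g \<longleftrightarrow> (\<exists>u \<in> tree_vertices d. g u \<noteq> u)"

lemma infinite_order_aut_iff_moves_vertex:
  "infinite_order_aut d g \<longleftrightarrow> (\<forall>n \<ge> 1. moves_vertex d (g ^^ n))"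
  by (simp add: infinite_order_aut_def moves_vertex_def)

lemma Cons_in_tree_vertices: "x \<in> {1..d} \<Longrightarrow> u \<in> tree_vertices d \<Longrightarrow> x # u \<in> tree_vertices d"
  by (simp add: tree_vertices_def)

lemma fixes_with_section_funpow:
  "fixes_with_section f x h \<Longrightarrow> fixes_with_section (f ^^ n) x (h ^^ n)"
  unfolding fixes_with_section_def by (induction n) auto

lemma moves_vertex_Cons:
  assumes "x \<in> {1..d}" "fixes_with_section g x h" "moves_vertex d h"
  shows "moves_vertex d g"
proof -
  obtain u where "u \<in> tree_vertices d" "h u \<noteq> u"
    using assms(3) unfolding moves_vertex_def by blast
  moreover have "g (x # u) = x # h u"
    using assms(2) unfolding fixes_with_section_def by blast
  ultimately have "g (x # u) \<noteq> x # u" "x # u \<in> tree_vertices d"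
    using Cons_in_tree_vertices[OF assms(1)] by simp_all
  then show ?thesis
    unfolding moves_vertex_def by blast
qed

lemma funpow_fixed_point: "f x = x \<Longrightarrow> (f ^^ n) x = x"
  by (induction n) auto

lemma moves_vertex_of_funpow:
  assumes "moves_vertex d (f ^^ n)"
  shows "moves_vertex d f"
proof -
  obtain u where "u \<in> tree_vertices d" "(f ^^ n) u \<noteq> u"
    using assms unfolding moves_vertex_def by blast
  moreover from this(2) have "f u \<noteq> u"
    using funpow_fixed_point by metis
  ultimately show ?thesis
    unfolding moves_vertex_def by blast
qed

lemma infinite_order_aut_if_power_section:
  assumes "1 \<le> k" "x \<in> {1..d}" "fixes_with_section (g ^^ k) x h" "infinite_order_aut d h"
  shows "infinite_order_aut d g"
  unfolding infinite_order_aut_iff_moves_vertex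
proof (intro allI impI)
  fix n :: nat
  assume "1 \<le> n"
  have "moves_vertex d ((g ^^ k) ^^ n)"
  proof (rule moves_vertex_Cons[OF assms(2)])
    show "fixes_with_section ((g ^^ k) ^^ n) x (h ^^ n)"
      using assms(3) by (rule fixes_with_section_funpow)
    show "moves_vertex d (h ^^ n)"
      using assms(4) \<open>1 \<le> n\<close> by (simp add: infinite_order_aut_iff_moves_vertex)
  qed
  then have "moves_vertex d ((g ^^ n) ^^ k)"
    by (simp only: funpow_mult mult.commute)
  then show "moves_vertex d (g ^^ n)"
    by (rule moves_vertex_of_funpow)
qed

lemma moves_vertex_funpow_by_orbit:
  assumes "2 \<le> p" "x \<in> {1..d}" "fixes_with_section (f ^^ p) x h"
    and leaves_x: "\<And>r w v. 1 \<le> r \<Longrightarrow> r < p \<Longrightarrow> (f ^^ r) (x # w) \<noteq> x # v"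
    and "1 \<le> n" and IH: "\<And>q. 1 \<le> q \<Longrightarrow> q < n \<Longrightarrow> moves_vertex d (h ^^ q)"
  shows "moves_vertex d (f ^^ n)"
proof -
  define q r where "q = n div p" and "r = n mod p"
  have "n = r + p * q"
    by (simp add: q_def r_def)
  then have f_n: "f ^^ n = (f ^^ r) \<circ> ((f ^^ p) ^^ q)"
    by (simp add: funpow_add funpow_mult)
  have sec: "fixes_with_section ((f ^^ p) ^^ q) x (h ^^ q)"
    using assms(3) by (rule fixes_with_section_funpow)
  show ?thesis
  proof (cases "r = 0")
    case False
    have "r < p"
      using assms(1) by (simp add: r_def)
    with False leaves_x have "(f ^^ n) [x] \<noteq> [x]"
      using sec by (simp add: f_n fixes_with_section_def)
    moreover have "[x] \<in> tree_vertices d"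
      using assms(2) by (simp add: tree_vertices_def)
    ultimately show ?thesis
      unfolding moves_vertex_def by blast
  next
    case True
    with \<open>n = r + p * q\<close> have "n = p * q"
      by simp
    with \<open>1 \<le> n\<close> \<open>2 \<le> p\<close> have "1 \<le> q" "q < n"
      by (auto simp: Suc_le_eq)
    then have "moves_vertex d ((f ^^ p) ^^ q)"
      using moves_vertex_Cons[OF assms(2) sec IH] by blast
    with True show ?thesis
      by (simp add: f_n)
  qed
qed

section \<open>Zigzag products\<close>

definition zigzag :: "nat \<Rightarrow> nat \<Rightarrow> nat list \<Rightarrow> nat list" where
  "zigzag d j = word_act d ([1..<Suc j] @ rev [2..<j])"

definition shifted_zigzag :: "nat \<Rightarrow> nat \<Rightarrow> nat list \<Rightarrow> nat list" where
  "shifted_zigzag d j = word_act d (2 # [1..<Suc j] @ rev [3..<j])"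

lemma zigzag_eq: "zigzag d j w = word_act d (rev [2..<j]) (word_act d [1..<Suc j] w)"
  by (simp add: zigzag_def word_act_append)

lemma shifted_zigzag_eq:
  "shifted_zigzag d j w = word_act d (rev [3..<j]) (word_act d [1..<Suc j] (gen_act d 2 w))"
  by (simp add: shifted_zigzag_def word_act_append word_act_Cons)

context
  fixes d j :: nat
  assumes j_less_d: "j < d"
begin

lemma zigzag_Cons_1: "2 \<le> j \<Longrightarrow> zigzag d j (1 # w) = Suc j # word_act d [1..<Suc j] w"
  using j_less_d
  by (simp add: zigzag_eq word_act_upt_Cons_first word_act_rev_upt_Cons_outside del: upt_Suc)

lemma zigzag_Cons_2: "2 \<le> j \<Longrightarrow> zigzag d j (2 # w) = 1 # gen_act d 2 w"
  using j_less_d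
  by (simp add: zigzag_eq word_act_upt_Cons_inside word_act_rev_upt_Cons_outside del: upt_Suc)

lemma zigzag_Cons_Suc:
  "2 \<le> j \<Longrightarrow> zigzag d j (Suc j # w) = 2 # word_act d (rev [3..<Suc j]) (gen_act d (Suc j) w)"
  using j_less_d word_act_rev_upt_Cons_last[of j d 2]
  by (simp add: zigzag_eq word_act_upt_Cons_inside del: upt_Suc)

lemma zigzag_power_section:
  assumes "2 \<le> j"
  shows "fixes_with_section (zigzag d j ^^ 3) 2 (shifted_zigzag d (Suc j))"
  unfolding fixes_with_section_def
proof
  fix w
  have "[1..<Suc (Suc j)] = [1..<Suc j] @ [Suc j]"
    by (simp only: upt_Suc_append[symmetric])
  then have "word_act d (rev [3..<Suc j]) (gen_act d (Suc j) (word_act d [1..<Suc j] (gen_act d 2 w)))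
      = shifted_zigzag d (Suc j) w"
    by (simp only: shifted_zigzag_eq word_act_append word_act_single)
  moreover have "(zigzag d j ^^ 3) (2 # w) = zigzag d j (zigzag d j (zigzag d j (2 # w)))"
    by (simp add: numeral_eq_Suc)
  ultimately show "(zigzag d j ^^ 3) (2 # w) = 2 # shifted_zigzag d (Suc j) w"
    using assms by (simp add: zigzag_Cons_1 zigzag_Cons_2 zigzag_Cons_Suc del: One_nat_def)
qed

lemma shifted_zigzag_Cons_1:
  "3 \<le> j \<Longrightarrow> shifted_zigzag d j (1 # w) = Suc j # word_act d [1..<Suc j] w"
  using j_less_d
  by (simp add: shifted_zigzag_eq gen_act_Cons_other word_act_upt_Cons_first
      word_act_rev_upt_Cons_outside del: upt_Suc)

lemma shifted_zigzag_Cons_3: "3 \<le> j \<Longrightarrow> shifted_zigzag d j (3 # w) = 1 # word_act d [3, 2] w"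
proof -
  assume "3 \<le> j"
  moreover have "gen_act d 2 (3 # w) = 2 # gen_act d 3 w"
    using gen_act_Cons_Suc[of 2 d w] \<open>3 \<le> j\<close> j_less_d by (simp add: numeral_eq_Suc)
  ultimately show ?thesis
    using j_less_d
    by (simp add: shifted_zigzag_eq word_act_upt_Cons_inside word_act_rev_upt_Cons_outside
        word_act_Cons del: upt_Suc)
qed

lemma shifted_zigzag_Cons_Suc:
  "3 \<le> j \<Longrightarrow>
   shifted_zigzag d j (Suc j # w) = 3 # word_act d (rev [4..<Suc j]) (gen_act d (Suc j) w)"
  using j_less_d word_act_rev_upt_Cons_last[of j d 3]
  by (simp add: shifted_zigzag_eq gen_act_Cons_other word_act_upt_Cons_inside numeral_eq_Suc
      del: upt_Suc)

lemma shifted_zigzag_power_section: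
  assumes "3 \<le> j"
  shows "fixes_with_section (shifted_zigzag d j ^^ 3) 1 (zigzag d (Suc j))"
  unfolding fixes_with_section_def
proof
  fix w
  have "[1..<Suc (Suc j)] = [1..<Suc j] @ [Suc j]"
    by (simp only: upt_Suc_append[symmetric])
  moreover have "[2..<Suc j] = 2 # 3 # [4..<Suc j]"
    using assms by (simp add: upt_conv_Cons numeral_eq_Suc)
  ultimately have "word_act d [3, 2] (word_act d (rev [4..<Suc j]) (gen_act d (Suc j) (word_act d [1..<Suc j] w)))
      = zigzag d (Suc j) w"
    by (simp add: zigzag_eq word_act_append word_act_Cons del: upt_Suc)
  moreover have "(shifted_zigzag d j ^^ 3) (1 # w) =
      shifted_zigzag d j (shifted_zigzag d j (shifted_zigzag d j (1 # w)))"
    by (simp add: numeral_eq_Suc del: One_nat_def)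
  ultimately show "(shifted_zigzag d j ^^ 3) (1 # w) = 1 # zigzag d (Suc j) w"
    using assms
    by (simp add: shifted_zigzag_Cons_1 shifted_zigzag_Cons_3 shifted_zigzag_Cons_Suc
        del: One_nat_def upt_Suc)
qed

end

section \<open>The case j = d\<close>

definition full_prod :: "nat \<Rightarrow> nat list \<Rightarrow> nat list" where
  "full_prod d = word_act d [1..<Suc d]"

definition twisted_prod :: "nat \<Rightarrow> nat list \<Rightarrow> nat list" where
  "twisted_prod d = word_act d (2 # 1 # rev [3..<Suc d])"

context
  fixes d :: nat
  assumes d_ge_3: "3 \<le> d"
begin

lemma full_prod_eq: "full_prod d w = gen_act d d (word_act d [1..<d] w)"
  using d_ge_3 by (simp add: full_prod_def word_act_append word_act_single)

lemma full_prod_Cons_1: "full_prod d (1 # w) = 1 # full_prod d w"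
  using d_ge_3 by (simp add: full_prod_eq word_act_upt_Cons_first gen_act_last_Cons_self)

lemma full_prod_Cons_2: "full_prod d (2 # w) = d # word_act d [2, 1] w"
proof -
  have "word_act d [1..<d] (2 # w) = 1 # gen_act d 2 w"
    using d_ge_3 word_act_upt_Cons_inside[where a = 1 and x = 2 and e = d] by simp
  then show ?thesis
    using d_ge_3 by (simp add: full_prod_eq gen_act_last_Cons_one word_act_Cons del: One_nat_def)
qed

lemma full_prod_Cons_ge_3:
  "3 \<le> x \<Longrightarrow> x \<le> d \<Longrightarrow> full_prod d (x # w) = (x - 1) # gen_act d x w"
  using d_ge_3 by (simp add: full_prod_eq word_act_upt_Cons_inside gen_act_last_Cons_other)

lemma twisted_prod_eq:
  "twisted_prod d w = word_act d (rev [3..<d]) (gen_act d d (gen_act d 1 (gen_act d 2 w)))"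
proof -
  have "rev [3..<Suc d] = d # rev [3..<d]"
    using d_ge_3 by simp
  then show ?thesis
    by (simp add: twisted_prod_def word_act_Cons)
qed

lemma twisted_prod_Cons_1: "twisted_prod d (1 # w) = 2 # gen_act d 1 w"
  using d_ge_3
  by (simp add: twisted_prod_eq gen_act_Cons_other gen_act_Cons_self gen_act_last_Cons_other
      word_act_rev_upt_Cons_outside)

lemma twisted_prod_Cons_2: "twisted_prod d (2 # w) = (if d = 3 then 1 else 4) # word_act d [2, 3] w"
  unfolding twisted_prod_eq using d_ge_3
  by (cases "d = 3")
    (simp_all add: gen_act_Cons_other gen_act_Cons_self gen_act_last_Cons_self
      gen_act_last_Cons_other word_act_rev_upt_Cons_inside word_act_Cons)

lemma twisted_prod_Cons_inside:
  "4 \<le> x \<Longrightarrow> x < d \<Longrightarrow> twisted_prod d (x # w) = Suc x # gen_act d x w"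
  using d_ge_3
  by (simp add: twisted_prod_eq gen_act_Cons_other gen_act_last_Cons_other word_act_rev_upt_Cons_inside)

lemma twisted_prod_Cons_last: "4 \<le> d \<Longrightarrow> twisted_prod d (d # w) = 1 # gen_act d d w"
  by (simp add: twisted_prod_eq gen_act_Cons_other gen_act_last_Cons_self word_act_rev_upt_Cons_outside)

lemma full_prod_funpow_Cons_2:
  "k \<le> d - 2 \<Longrightarrow>
   (full_prod d ^^ Suc k) (2 # w) = (d - k) # word_act d (2 # 1 # rev [Suc d - k..<Suc d]) w"
proof (induction k)
  case 0
  then show ?case
    by (simp add: full_prod_Cons_2)
next
  case (Suc k)
  have "Suc d - k = Suc (d - k)"
    using Suc.prems d_ge_3 by simp
  then have "[d - k..<Suc d] = (d - k) # [Suc d - k..<Suc d]"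
    by (simp only:) (rule upt_conv_Cons, simp)
  then have "2 # 1 # rev [d - k..<Suc d] = (2 # 1 # rev [Suc d - k..<Suc d]) @ [d - k]"
    by simp
  moreover have "(full_prod d ^^ Suc (Suc k)) (2 # w) =
      full_prod d ((d - k) # word_act d (2 # 1 # rev [Suc d - k..<Suc d]) w)"
    using Suc by simp
  moreover have "\<dots> = (d - Suc k) # gen_act d (d - k) (word_act d (2 # 1 # rev [Suc d - k..<Suc d]) w)"
    using Suc.prems by (subst full_prod_Cons_ge_3) auto
  ultimately show ?case
    by (simp only: word_act_append word_act_single diff_Suc_Suc)
qed

lemma full_prod_power_section: "fixes_with_section (full_prod d ^^ (d - 1)) 2 (twisted_prod d)"
proof -
  have "d - 1 = Suc (d - 2)" "Suc d - (d - 2) = 3"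
    using d_ge_3 by simp_all
  then show ?thesis
    using full_prod_funpow_Cons_2[of "d - 2"] d_ge_3
    by (simp add: fixes_with_section_def twisted_prod_def)
qed

lemma full_prod_funpow_leaves_2:
  "1 \<le> r \<Longrightarrow> r < d - 1 \<Longrightarrow> (full_prod d ^^ r) (2 # w) \<noteq> 2 # v"
  using full_prod_funpow_Cons_2[of "r - 1" w] by (cases r) auto

lemma twisted_prod_funpow_Cons_1:
  "1 \<le> k \<Longrightarrow> k \<le> d - 2 \<Longrightarrow>
   (twisted_prod d ^^ Suc k) (1 # w) = (if k = d - 2 then 1 else k + 3) # word_act d [1..<k + 3] w"
proof (induction k rule: dec_induct)
  case base
  have "[1..<4] = [1, 2, 3 :: nat]"
    by (simp add: upt_rec)
  then have "word_act d [2, 3] (gen_act d 1 w) = word_act d [1..<1 + 3] w"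
    by (simp add: word_act_Cons)
  moreover have "(twisted_prod d ^^ Suc 1) (1 # w) = twisted_prod d (twisted_prod d (1 # w))"
    by (simp add: numeral_2_eq_2 del: One_nat_def)
  ultimately show ?case
    using d_ge_3 by (auto simp: twisted_prod_Cons_1 twisted_prod_Cons_2 simp del: One_nat_def)
next
  case (step k)
  have "[1..<Suc k + 3] = [1..<k + 3] @ [k + 3]"
    by (simp flip: upt_Suc_append)
  then have extend: "gen_act d (k + 3) (word_act d [1..<k + 3] w) = word_act d [1..<Suc k + 3] w"
    by (simp only: word_act_append word_act_single)
  have "(twisted_prod d ^^ Suc (Suc k)) (1 # w) = twisted_prod d ((k + 3) # word_act d [1..<k + 3] w)"
    using step by simp
  also have "\<dots> = (if Suc k = d - 2 then 1 else Suc k + 3) # gen_act d (k + 3) (word_act d [1..<k + 3] w)"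
  proof (cases "Suc k = d - 2")
    case True
    then have "k + 3 = d" "4 \<le> d"
      using step by auto
    with True show ?thesis
      using twisted_prod_Cons_last by simp
  next
    case False
    with step show ?thesis
      by (simp add: twisted_prod_Cons_inside)
  qed
  finally show ?case
    by (simp only: extend)
qed

lemma twisted_prod_power_section: "fixes_with_section (twisted_prod d ^^ (d - 1)) 1 (full_prod d)"
proof -
  have "d - 1 = Suc (d - 2)" "d - 2 + 3 = Suc d"
    using d_ge_3 by simp_all
  then show ?thesis
    using twisted_prod_funpow_Cons_1[of "d - 2"] d_ge_3
    by (simp add: fixes_with_section_def full_prod_def)
qed

lemma twisted_prod_funpow_leaves_1:
  "1 \<le> r \<Longrightarrow> r < d - 1 \<Longrightarrow> (twisted_prod d ^^ r) (1 # w) \<noteq> 1 # v"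
  using twisted_prod_Cons_1 twisted_prod_funpow_Cons_1[of "r - 1" w]
  by (cases "r = 1") auto

lemma moves_vertex_funpow_full_prod_twisted_prod:
  "1 \<le> n \<Longrightarrow> moves_vertex d (full_prod d ^^ n) \<and> moves_vertex d (twisted_prod d ^^ n)"
proof (induction n rule: less_induct)
  case (less n)
  have "2 \<le> d - 1" "1 \<in> {1..d}" "2 \<in> {1..d}"
    using d_ge_3 by auto
  with less show ?case
    using moves_vertex_funpow_by_orbit[OF _ _ full_prod_power_section full_prod_funpow_leaves_2]
      moves_vertex_funpow_by_orbit[OF _ _ twisted_prod_power_section twisted_prod_funpow_leaves_1]
    by blast
qed

lemma infinite_order_full_prod: "infinite_order_aut d (full_prod d)"
  using moves_vertex_funpow_full_prod_twisted_prod by (simp add: infinite_order_aut_iff_moves_vertex)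

lemma infinite_order_twisted_prod: "infinite_order_aut d (twisted_prod d)"
  using moves_vertex_funpow_full_prod_twisted_prod by (simp add: infinite_order_aut_iff_moves_vertex)

lemma zigzag_top_section: "fixes_with_section (zigzag d d) 2 (twisted_prod d)"
proof -
  have "zigzag d d w = word_act d (rev [2..<d]) (full_prod d w)" for w
    by (simp add: zigzag_eq full_prod_def del: upt_Suc)
  then show ?thesis
    using d_ge_3 word_act_rev_upt_Cons_last[of d d 2] full_prod_Cons_2
    by (simp add: fixes_with_section_def twisted_prod_def word_act_Cons del: upt_Suc)
qed

lemma shifted_zigzag_top_section: "fixes_with_section (shifted_zigzag d d) 1 (full_prod d)"
proof -
  have "shifted_zigzag d d w = word_act d (rev [3..<d]) (full_prod d (gen_act d 2 w))" for w
    by (simp add: shifted_zigzag_eq full_prod_def del: upt_Suc)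
  then show ?thesis
    using d_ge_3 full_prod_Cons_1
    by (simp add: fixes_with_section_def gen_act_Cons_other word_act_rev_upt_Cons_outside
        del: One_nat_def)
qed

lemma infinite_order_zigzag:
  "j \<le> d \<Longrightarrow> 2 \<le> j \<Longrightarrow>
   infinite_order_aut d (zigzag d j) \<and> (3 \<le> j \<longrightarrow> infinite_order_aut d (shifted_zigzag d j))"
proof (induction j rule: inc_induct)
  case base
  have "2 \<in> {1..d}" "1 \<in> {1..d}"
    using d_ge_3 by auto
  then show ?case
    using infinite_order_aut_if_power_section[of 1 2 d "zigzag d d" "twisted_prod d"]
      infinite_order_aut_if_power_section[of 1 1 d "shifted_zigzag d d" "full_prod d"]
      zigzag_top_section shifted_zigzag_top_section
      infinite_order_twisted_prod infinite_order_full_prod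
    by simp
next
  case (step j)
  then have "j < d" "2 \<le> j" "2 \<in> {1..d}" "1 \<in> {1..d}"
    and IH: "infinite_order_aut d (zigzag d (Suc j))" "infinite_order_aut d (shifted_zigzag d (Suc j))"
    by auto
  then show ?case
    using infinite_order_aut_if_power_section[of 3 2 d "zigzag d j" "shifted_zigzag d (Suc j)"]
      infinite_order_aut_if_power_section[of 3 1 d "shifted_zigzag d j" "zigzag d (Suc j)"]
      zigzag_power_section shifted_zigzag_power_section
    by simp
qed

end

section \<open>The products a_1 \<cdots> a_i\<close>

lemma prefix_prod_funpow_Cons_1:
  assumes "1 \<le> i" "i < d"
  shows "k \<le> i \<Longrightarrow> (word_act d [1..<Suc i] ^^ Suc k) (1 # w) =
    (Suc i - k) # word_act d ([1..<Suc i] @ rev [Suc (Suc i) - k..<Suc (Suc i)]) w"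
proof (induction k)
  case 0
  then show ?case
    using assms by (simp add: word_act_upt_Cons_first del: upt_Suc)
next
  case (Suc k)
  define x where "x = Suc i - Suc k"
  have shifts: "Suc (Suc i) - Suc k = Suc x" "Suc (Suc i) - k = Suc (Suc x)" "Suc i - k = Suc x"
    using Suc.prems unfolding x_def by auto
  have "[Suc x..<Suc (Suc i)] = Suc x # [Suc (Suc x)..<Suc (Suc i)]"
    using Suc.prems unfolding x_def by (intro upt_conv_Cons) auto
  then have extend: "gen_act d (Suc x) (word_act d ([1..<Suc i] @ rev [Suc (Suc x)..<Suc (Suc i)]) w)
      = word_act d ([1..<Suc i] @ rev [Suc (Suc i) - Suc k..<Suc (Suc i)]) w"
    unfolding shifts(1) by (simp del: upt_Suc add: word_act_append word_act_single)
  have "(word_act d [1..<Suc i] ^^ Suc (Suc k)) (1 # w)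
      = word_act d [1..<Suc i] (Suc x # word_act d ([1..<Suc i] @ rev [Suc (Suc x)..<Suc (Suc i)]) w)"
    using Suc by (simp del: upt_Suc add: shifts)
  also have "\<dots> = x # gen_act d (Suc x) (word_act d ([1..<Suc i] @ rev [Suc (Suc x)..<Suc (Suc i)]) w)"
    using Suc.prems assms word_act_upt_Cons_inside[of "Suc i" d 1 "Suc x"] unfolding x_def by auto
  also have "\<dots> = (Suc i - Suc k) # word_act d ([1..<Suc i] @ rev [Suc (Suc i) - Suc k..<Suc (Suc i)]) w"
    by (subst extend) (simp add: x_def)
  finally show ?case .
qed

lemma prefix_prod_power_section:
  assumes "1 \<le> i" "i < d"
  shows "fixes_with_section (word_act d [1..<Suc i] ^^ Suc i) 1 (zigzag d (Suc i))"
proof -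
  have "[2..<Suc (Suc i)] = [2..<Suc i] @ [Suc i]" "[1..<Suc (Suc i)] = [1..<Suc i] @ [Suc i]"
    using assms by (simp_all only: upt_Suc_append[symmetric])
  then show ?thesis
    using prefix_prod_funpow_Cons_1[OF assms order.refl]
    by (simp add: fixes_with_section_def zigzag_def word_act_append word_act_single del: upt_Suc)
qed

theorem lemma3p6:
  fixes d i :: nat
  assumes "d \<ge> 3" and "1 \<le> i" and "i < d"
  shows "infinite_order_aut d (word_act d [1..<i+1])"
proof (rule infinite_order_aut_if_power_section)
  show "fixes_with_section (word_act d [1..<i+1] ^^ Suc i) 1 (zigzag d (Suc i))"
    using prefix_prod_power_section[OF assms(2,3)] by simp
  show "infinite_order_aut d (zigzag d (Suc i))"
    using infinite_order_zigzag[OF assms(1)] assms(2,3) by simp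
qed (use assms in auto)

end
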